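(* Let $\Gamma_1,\Gamma_2,\Gamma_3$ be constants with $\Gamma_1+\Gamma_2+\Gamma_3=0$. Let $\vec\alpha_0,\vec\alpha_1,\vec\alpha_2,\vec\alpha_3\in\mathbb{R}^3$ be arbitrary vectors, and put $$\vec e_i=\tfrac12\left(\vec\alpha_0+\vec\alpha_i-\vec\alpha_j-\vec\alpha_k\right)\quad(\{i,j,k\}=\{1,2,3\}),\qquad \vec\delta=\tfrac14\sum_{\ell=0}^{3}\vec\alpha_\ell .$$ Let $\lambda_0,\dots,\lambda_3$ be pairwise distinct constants with $\sum_{i=1}^3\Gamma_i\lambda_i\neq0$ and $$\lambda_0=\sum_{i=1}^3\lambda_i-\frac{\sum_{i=1}^3\Gamma_i\lambda_i^2}{\sum_{i=1}^3\Gamma_i\lambda_i},$$ and let $a_{l,m}$ (skew-symmetric: $a_{m,l}=-a_{l,m}$) and $b_{l,m}$ (symmetric) for $l\ne m$ in $\{0,1,2,3\}$ be constants with $a_{l,m}b_{l,m}=\lambda_l-\lambda_m$. Suppose $\sigma,\rho,\tau:\mathbb{R}^3\to\mathbb{C}$ satisfy, for all $\vec x\in\mathbb{R}^3$ and all $l\neq m$ in $\{0,1,2,3\}$, $$a_{l,m}\,\tau(\vec x)\,\sigma(\vec x+\vec\alpha_l+\vec\alpha_m)=\sigma(\vec x+\vec\alpha_l)\tau(\vec x+\vec\alpha_m)-\tau(\vec x+\vec\alpha_l)\sigma(\vec x+\vec\alpha_m),$$ $$a_{l,m}\,\rho(\vec x)\,\tau(\vec x+\vec\alpha_l+\vec\alpha_m)=\tau(\vec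 x+\vec\alpha_l)\rho(\vec x+\vec\alpha_m)-\rho(\vec x+\vec\alpha_l)\tau(\vec x+\vec\alpha_m),$$ $$b_{l,m}\,\tau(\vec x+\vec\alpha_l)\tau(\vec x+\vec\alpha_m)=\tau(\vec x)\tau(\vec x+\vec\alpha_l+\vec\alpha_m)+\rho(\vec x)\sigma(\vec x+\vec\alpha_l+\vec\alpha_m).$$ For $n=(n_1,n_2,n_3)\in\mathbb{Z}^3$ let $\vec x(n)=\sum_{i}n_i\vec e_i$ and define $$u(n)=\begin{cases}\rho(\vec x(n)-\vec\delta)/\tau(\vec x(n)-\vec\delta), & n_1+n_2+n_3\ \text{even},\\ \sigma(\vec x(n)+\vec\delta)/\tau(\vec x(n)+\vec\delta), & n_1+n_2+n_3\ \text{odd}.\end{cases}$$ Then $u$ satisfies $$\sum_{i=1}^3\Gamma_i\left[\frac{u(n+e_i)}{1+u(n)u(n+e_i)}+\frac{u(n-e_i)}{1+u(n)u(n-e_i)}\right]=0$$ for every $n\in\mathbb{Z}^3$ at which all quantities involved are defined (all denominators nonzero), where $e_i$ denotes the $i$-th standard unit vector of $\mathbb{Z}^3$.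
   Context: This equation is the Euler–Lagrange ("variational") equation $\partial\mathcal S/\partial u(n)=0$ of the lattice action $\mathcal S=\sum_{n\in\mathbb{Z}^3}\sum_{i=1}^3\Gamma_i\ln[1+u(n)u(n+e_i)]$. The parity classes $n_1+n_2+n_3$ even/odd are the two sublattices of the bipartite cubic lattice. *)

theory Defs
  imports "HOL-Analysis.Analysis"
begin

type_synonym lat = "int \<times> int \<times> int"

definition unitv :: "nat \<Rightarrow> lat" where
  "unitv i = (if i = 1 then (1,0,0) else if i = 2 then (0,1,0) else (0,0,1))"

definition addl :: "lat \<Rightarrow> lat \<Rightarrow> lat" where
  "addl p q = (fst p + fst q, fst (snd p) + fst (snd q), snd (snd p) + snd (snd q))"

definition subl :: "lat \<Rightarrow> lat \<Rightarrow> lat" where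
  "subl p q = (fst p - fst q, fst (snd p) - fst (snd q), snd (snd p) - snd (snd q))"

definition evec :: "(nat \<Rightarrow> real^3) \<Rightarrow> nat \<Rightarrow> real^3" where
  "evec \<alpha> i = (1/2) *\<^sub>R (\<alpha> 0 + \<alpha> i - (\<Sum>j\<in>{1,2,3} - {i}. \<alpha> j))"

definition delta :: "(nat \<Rightarrow> real^3) \<Rightarrow> real^3" where
  "delta \<alpha> = (1/4) *\<^sub>R (\<Sum>l\<in>{0..3}. \<alpha> l)"

definition xpos :: "(nat \<Rightarrow> real^3) \<Rightarrow> lat \<Rightarrow> real^3" where
  "xpos \<alpha> n = of_int (fst n) *\<^sub>R evec \<alpha> 1 + of_int (fst (snd n)) *\<^sub>R evec \<alpha> 2
               + of_int (snd (snd n)) *\<^sub>R evec \<alpha> 3"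

definition parity_even :: "lat \<Rightarrow> bool" where
  "parity_even n = even (fst n + fst (snd n) + snd (snd n))"

definition upt_pt :: "(nat \<Rightarrow> real^3) \<Rightarrow> lat \<Rightarrow> real^3" where
  "upt_pt \<alpha> n = (if parity_even n then xpos \<alpha> n - delta \<alpha> else xpos \<alpha> n + delta \<alpha>)"

definition ufun :: "(real^3 \<Rightarrow> complex) \<Rightarrow> (real^3 \<Rightarrow> complex) \<Rightarrow> (real^3 \<Rightarrow> complex)
    \<Rightarrow> (nat \<Rightarrow> real^3) \<Rightarrow> lat \<Rightarrow> complex" where
  "ufun \<sigma> \<rho> \<tau> \<alpha> n =
     (if parity_even n then \<rho> (xpos \<alpha> n - delta \<alpha>) / \<tau> (xpos \<alpha> n - delta \<alpha>)
      else \<sigma> (xpos \<alpha> n + delta \<alpha>) / \<tau> (xpos \<alpha> n + delta \<alpha>))"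

end

theory Submission
  imports Defs
begin

(* At an even site n put y = x(n) - delta, so that u(n) = rho(y)/tau(y). Each neighbour n + e_i
   or n - e_i is odd, and its value is sigma(P)/tau(P) at P = y + alpha_l + alpha_m, with
   {l,m} = {0,i} for n + e_i and {l,m} = {j,k} for n - e_i. The sigma-tau and the tau-tau
   equation for the pair (l,m), taken at y, turn u(n')/(1 + u(n) u(n')) into the divided
   difference (S_l - S_m)/(lambda_l - lambda_m) of S_l = sigma(y + alpha_l)/tau(y + alpha_l);
   odd sites behave the same way with the rho-tau equation. The equation at n thus becomes
   a Gamma-weighted sum of six divided differences of S, which vanishes for every S exactly
   because of the choice of lambda_0. *)

definition divdiff :: "(nat \<Rightarrow> 'a::field) \<Rightarrow> (nat \<Rightarrow> 'a) \<Rightarrow> nat \<Rightarrow> nat \<Rightarrow> 'a" where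
  "divdiff S lam l m = (S l - S m) / (lam l - lam m)"

lemma weighted_divdiff_sum_eq_0:
  fixes \<Gamma> lam S :: "nat \<Rightarrow> 'a::field"
  assumes Gamma_sum: "\<Gamma> 1 + \<Gamma> 2 + \<Gamma> 3 = 0"
    and lam_distinct: "\<And>l m. l < 4 \<Longrightarrow> m < 4 \<Longrightarrow> l \<noteq> m \<Longrightarrow> lam l \<noteq> lam m"
    and D_nonzero: "(\<Sum>i\<in>{1,2,3}. \<Gamma> i * lam i) \<noteq> 0"
    and lam0_eq: "lam 0 = (\<Sum>i\<in>{1,2,3}. lam i)
                - (\<Sum>i\<in>{1,2,3}. \<Gamma> i * (lam i)\<^sup>2) / (\<Sum>i\<in>{1,2,3}. \<Gamma> i * lam i)"
  shows "\<Gamma> 1 * (divdiff S lam 0 1 + divdiff S lam 2 3) + \<Gamma> 2 * (divdiff S lam 0 2 + divdiff S lam 1 3)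
       + \<Gamma> 3 * (divdiff S lam 0 3 + divdiff S lam 1 2) = 0"
proof -
  define D where "D = \<Gamma> 1 * lam 1 + \<Gamma> 2 * lam 2 + \<Gamma> 3 * lam 3"
  have "D \<noteq> 0" using D_nonzero by (simp add: D_def add.assoc)
  then have "lam 0 * D = (lam 1 + lam 2 + lam 3) * D
      - (\<Gamma> 1 * (lam 1)\<^sup>2 + \<Gamma> 2 * (lam 2)\<^sup>2 + \<Gamma> 3 * (lam 3)\<^sup>2)"
    using lam0_eq by (simp add: D_def add.assoc field_simps)
  moreover have "lam 0 - lam 1 \<noteq> 0" "lam 0 - lam 2 \<noteq> 0" "lam 0 - lam 3 \<noteq> 0"
    "lam 1 - lam 2 \<noteq> 0" "lam 1 - lam 3 \<noteq> 0" "lam 2 - lam 3 \<noteq> 0"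
    using lam_distinct by simp_all
  \<comment> \<open>With Gamma_sum the first fact says (lam 0 - lam i) D = - \<Gamma> i (lam i - lam j) (lam i - lam k)
    for {i,j,k} = {1,2,3}; after clearing denominators the claim lies in the ideal generated
    by these relations.\<close>
  ultimately show ?thesis
    using Gamma_sum unfolding divdiff_def D_def by (simp add: divide_simps) algebra
qed

lemma quotient_eq_divided_difference:
  fixes a b t0 t1 tl tm r s sl sm :: "'a::field"
  assumes "a \<noteq> 0" "t0 \<noteq> 0" "t1 \<noteq> 0" "1 + r/t0 * (s/t1) \<noteq> 0"
    and bilin: "a * t0 * s = sl * tm - tl * sm"
    and quad: "b * tl * tm = t0 * t1 + r * s"
  shows "s/t1 / (1 + r/t0 * (s/t1)) = (sl/tl - sm/tm) / (a * b)"
proof -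
  have denom: "1 + r/t0 * (s/t1) = b * tl * tm / (t0 * t1)"
    unfolding quad using assms(2,3) by (simp add: field_simps)
  then have "b \<noteq> 0" "tl \<noteq> 0" "tm \<noteq> 0" using assms(4) by auto
  have "s/t1 / (1 + r/t0 * (s/t1)) = a * t0 * s / (a * b * tl * tm)"
    unfolding denom using assms(1-3) \<open>b \<noteq> 0\<close> \<open>tl \<noteq> 0\<close> \<open>tm \<noteq> 0\<close> by (simp add: field_simps)
  also have "\<dots> = (sl/tl - sm/tm) / (a * b)"
    unfolding bilin using \<open>tl \<noteq> 0\<close> \<open>tm \<noteq> 0\<close> by (simp add: field_simps)
  finally show ?thesis .
qed

lemma delta_eq: "delta \<alpha> = (1/4) *\<^sub>R (\<alpha> 0 + \<alpha> 1 + \<alpha> 2 + \<alpha> 3)"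
  by (simp add: delta_def numeral_3_eq_3 numeral_2_eq_2 atLeast0_atMost_Suc algebra_simps)

lemma evec_eq:
  "evec \<alpha> 1 = (1/2) *\<^sub>R (\<alpha> 0 + \<alpha> 1 - \<alpha> 2 - \<alpha> 3)"
  "evec \<alpha> 2 = (1/2) *\<^sub>R (\<alpha> 0 + \<alpha> 2 - \<alpha> 1 - \<alpha> 3)"
  "evec \<alpha> 3 = (1/2) *\<^sub>R (\<alpha> 0 + \<alpha> 3 - \<alpha> 1 - \<alpha> 2)"
  by (simp_all add: evec_def insert_Diff_if algebra_simps)

lemma evec_add_two_delta:
  assumes "i \<in> {1,2,3}" shows "evec \<alpha> i + 2 *\<^sub>R delta \<alpha> = \<alpha> 0 + \<alpha> i"
  using assms by (elim insertE emptyE) (simp_all only: evec_eq delta_eq, simp_all add: vec_eq_iff field_simps)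

lemma two_delta_diff_evec:
  "2 *\<^sub>R delta \<alpha> - evec \<alpha> 1 = \<alpha> 2 + \<alpha> 3"
  "2 *\<^sub>R delta \<alpha> - evec \<alpha> 2 = \<alpha> 1 + \<alpha> 3"
  "2 *\<^sub>R delta \<alpha> - evec \<alpha> 3 = \<alpha> 1 + \<alpha> 2"
  unfolding evec_eq delta_eq by (simp_all add: vec_eq_iff field_simps)

lemma xpos_addl_unitv: "i \<in> {1,2,3} \<Longrightarrow> xpos \<alpha> (addl n (unitv i)) = xpos \<alpha> n + evec \<alpha> i"
  by (auto simp: xpos_def addl_def unitv_def algebra_simps)

lemma xpos_subl_unitv: "i \<in> {1,2,3} \<Longrightarrow> xpos \<alpha> (subl n (unitv i)) = xpos \<alpha> n - evec \<alpha> i"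
  by (auto simp: xpos_def subl_def unitv_def algebra_simps)

lemma parity_even_addl_unitv: "i \<in> {1,2,3} \<Longrightarrow> parity_even (addl n (unitv i)) \<longleftrightarrow> \<not> parity_even n"
  by (auto simp: parity_even_def addl_def unitv_def)

lemma parity_even_subl_unitv: "i \<in> {1,2,3} \<Longrightarrow> parity_even (subl n (unitv i)) \<longleftrightarrow> \<not> parity_even n"
  by (auto simp: parity_even_def subl_def unitv_def)

lemma upt_pt_neighbours_even:
  assumes "parity_even n" "i \<in> {1,2,3}"
  shows "upt_pt \<alpha> (addl n (unitv i)) = upt_pt \<alpha> n + (evec \<alpha> i + 2 *\<^sub>R delta \<alpha>)"
    and "upt_pt \<alpha> (subl n (unitv i)) = upt_pt \<alpha> n + (2 *\<^sub>R delta \<alpha> - evec \<alpha> i)"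
  using assms by (simp_all add: upt_pt_def xpos_addl_unitv xpos_subl_unitv parity_even_addl_unitv
      parity_even_subl_unitv scaleR_2 del: insert_iff)

lemma upt_pt_neighbours_odd:
  assumes "\<not> parity_even n" "i \<in> {1,2,3}"
  shows "upt_pt \<alpha> (addl n (unitv i)) + (2 *\<^sub>R delta \<alpha> - evec \<alpha> i) = upt_pt \<alpha> n"
    and "upt_pt \<alpha> (subl n (unitv i)) + (evec \<alpha> i + 2 *\<^sub>R delta \<alpha>) = upt_pt \<alpha> n"
  using assms by (simp_all add: upt_pt_def xpos_addl_unitv xpos_subl_unitv parity_even_addl_unitv
      parity_even_subl_unitv scaleR_2 del: insert_iff)

lemma ufun_eq: "ufun \<sigma> \<rho> \<tau> \<alpha> n = (if parity_even n then \<rho> else \<sigma>) (upt_pt \<alpha> n) / \<tau> (upt_pt \<alpha> n)"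
  by (simp add: ufun_def upt_pt_def)

locale bilinear_tau_system =
  fixes \<alpha> :: "nat \<Rightarrow> real^3" and lam :: "nat \<Rightarrow> complex" and a b :: "nat \<Rightarrow> nat \<Rightarrow> complex"
    and \<sigma> \<rho> \<tau> :: "real^3 \<Rightarrow> complex"
  assumes lam_distinct: "\<And>l m. l < 4 \<Longrightarrow> m < 4 \<Longrightarrow> l \<noteq> m \<Longrightarrow> lam l \<noteq> lam m"
    and ab_eq: "\<And>l m. l < 4 \<Longrightarrow> m < 4 \<Longrightarrow> l \<noteq> m \<Longrightarrow> a l m * b l m = lam l - lam m"
    and sigma_tau_eq: "\<And>x l m. l < 4 \<Longrightarrow> m < 4 \<Longrightarrow> l \<noteq> m \<Longrightarrow>
        a l m * \<tau> x * \<sigma> (x + \<alpha> l + \<alpha> m)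
          = \<sigma> (x + \<alpha> l) * \<tau> (x + \<alpha> m) - \<tau> (x + \<alpha> l) * \<sigma> (x + \<alpha> m)"
    and rho_tau_eq: "\<And>x l m. l < 4 \<Longrightarrow> m < 4 \<Longrightarrow> l \<noteq> m \<Longrightarrow>
        a l m * \<rho> x * \<tau> (x + \<alpha> l + \<alpha> m)
          = \<tau> (x + \<alpha> l) * \<rho> (x + \<alpha> m) - \<rho> (x + \<alpha> l) * \<tau> (x + \<alpha> m)"
    and tau_tau_eq: "\<And>x l m. l < 4 \<Longrightarrow> m < 4 \<Longrightarrow> l \<noteq> m \<Longrightarrow>
        b l m * \<tau> (x + \<alpha> l) * \<tau> (x + \<alpha> m)
          = \<tau> x * \<tau> (x + \<alpha> l + \<alpha> m) + \<rho> x * \<sigma> (x + \<alpha> l + \<alpha> m)"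
begin

abbreviation u :: "lat \<Rightarrow> complex" where
  "u \<equiv> ufun \<sigma> \<rho> \<tau> \<alpha>"

lemma a_nonzero: "l < 4 \<Longrightarrow> m < 4 \<Longrightarrow> l \<noteq> m \<Longrightarrow> a l m \<noteq> 0"
  using ab_eq lam_distinct by fastforce

lemma even_site_quotient:
  assumes "parity_even n" "\<not> parity_even n'" and lm: "l < 4" "m < 4" "l \<noteq> m"
    and pt: "upt_pt \<alpha> n' = upt_pt \<alpha> n + (\<alpha> l + \<alpha> m)"
    and "\<tau> (upt_pt \<alpha> n) \<noteq> 0" "\<tau> (upt_pt \<alpha> n') \<noteq> 0" "1 + u n * u n' \<noteq> 0"
  shows "u n' / (1 + u n * u n') = divdiff (\<lambda>k. \<sigma> (upt_pt \<alpha> n + \<alpha> k) / \<tau> (upt_pt \<alpha> n + \<alpha> k)) lam l m"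
proof -
  let ?y = "upt_pt \<alpha> n"
  have n': "upt_pt \<alpha> n' = ?y + \<alpha> l + \<alpha> m" using pt by (simp add: add.assoc)
  have "u n = \<rho> ?y / \<tau> ?y" "u n' = \<sigma> (?y + \<alpha> l + \<alpha> m) / \<tau> (?y + \<alpha> l + \<alpha> m)"
    using assms(1,2) n' by (simp_all add: ufun_eq)
  with assms(7-9) n' have "u n' / (1 + u n * u n')
      = (\<sigma> (?y + \<alpha> l) / \<tau> (?y + \<alpha> l) - \<sigma> (?y + \<alpha> m) / \<tau> (?y + \<alpha> m)) / (a l m * b l m)"
    by (simp only:) (rule quotient_eq_divided_difference[OF a_nonzero[OF lm] _ _ _
        sigma_tau_eq[OF lm] tau_tau_eq[OF lm]], simp_all)
  then show ?thesis by (simp add: divdiff_def ab_eq[OF lm])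
qed

lemma odd_site_quotient:
  assumes "\<not> parity_even n" "parity_even n'" and lm: "l < 4" "m < 4" "l \<noteq> m"
    and pt: "upt_pt \<alpha> n' + (\<alpha> l + \<alpha> m) = upt_pt \<alpha> n"
    and "\<tau> (upt_pt \<alpha> n) \<noteq> 0" "\<tau> (upt_pt \<alpha> n') \<noteq> 0" "1 + u n * u n' \<noteq> 0"
  shows "u n' / (1 + u n * u n') = divdiff (\<lambda>k. \<rho> (upt_pt \<alpha> n - \<alpha> k) / \<tau> (upt_pt \<alpha> n - \<alpha> k)) lam l m"
proof -
  let ?x = "upt_pt \<alpha> n'" and ?z = "upt_pt \<alpha> n"
  have shift: "?x + \<alpha> l + \<alpha> m = ?z" "?x + \<alpha> l = ?z - \<alpha> m" "?x + \<alpha> m = ?z - \<alpha> l"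
    using pt by (auto simp: algebra_simps)
  have "u n = \<sigma> ?z / \<tau> ?z" "u n' = \<rho> ?x / \<tau> ?x"
    using assms(1,2) by (simp_all add: ufun_eq)
  with assms(7-9) have "u n' / (1 + u n * u n')
      = (\<rho> (?z - \<alpha> l) / \<tau> (?z - \<alpha> l) - \<rho> (?z - \<alpha> m) / \<tau> (?z - \<alpha> m)) / (a l m * b l m)"
    using rho_tau_eq[OF lm, of ?x, unfolded shift] tau_tau_eq[OF lm, of ?x, unfolded shift]
    by (simp only:) (rule quotient_eq_divided_difference[OF a_nonzero[OF lm]], simp_all add: algebra_simps)
  then show ?thesis by (simp add: divdiff_def ab_eq[OF lm])
qed

lemma neighbour_sum_eq_weighted_divdiffs:
  fixes \<Gamma> :: "nat \<Rightarrow> complex"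
  assumes "\<tau> (upt_pt \<alpha> n) \<noteq> 0"
    and "\<And>i. i \<in> {1,2,3} \<Longrightarrow> \<tau> (upt_pt \<alpha> (addl n (unitv i))) \<noteq> 0"
    and "\<And>i. i \<in> {1,2,3} \<Longrightarrow> \<tau> (upt_pt \<alpha> (subl n (unitv i))) \<noteq> 0"
    and "\<And>i. i \<in> {1,2,3} \<Longrightarrow> 1 + u n * u (addl n (unitv i)) \<noteq> 0"
    and "\<And>i. i \<in> {1,2,3} \<Longrightarrow> 1 + u n * u (subl n (unitv i)) \<noteq> 0"
  obtains S where "(\<Sum>i\<in>{1,2,3}. \<Gamma> i *
            (u (addl n (unitv i)) / (1 + u n * u (addl n (unitv i)))
           + u (subl n (unitv i)) / (1 + u n * u (subl n (unitv i)))))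
     = \<Gamma> 1 * (divdiff S lam 0 1 + divdiff S lam 2 3) + \<Gamma> 2 * (divdiff S lam 0 2 + divdiff S lam 1 3)
       + \<Gamma> 3 * (divdiff S lam 0 3 + divdiff S lam 1 2)"
proof (cases "parity_even n")
  case True
  define S where "S = (\<lambda>k. \<sigma> (upt_pt \<alpha> n + \<alpha> k) / \<tau> (upt_pt \<alpha> n + \<alpha> k))"
  have plus: "u (addl n (unitv i)) / (1 + u n * u (addl n (unitv i))) = divdiff S lam 0 i"
    if i: "i \<in> {1,2,3}" for i
  proof -
    have "upt_pt \<alpha> (addl n (unitv i)) = upt_pt \<alpha> n + (\<alpha> 0 + \<alpha> i)"
      using upt_pt_neighbours_even(1)[OF True i, where \<alpha> = \<alpha>] evec_add_two_delta[OF i] by simp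
    from even_site_quotient[OF True _ _ _ _ this assms(1) assms(2,4)[OF i]] i show ?thesis
      by (auto simp: S_def parity_even_addl_unitv True)
  qed
  have minus: "u (subl n (unitv i)) / (1 + u n * u (subl n (unitv i))) = divdiff S lam j k"
    if i: "i \<in> {1,2,3}" and jk: "2 *\<^sub>R delta \<alpha> - evec \<alpha> i = \<alpha> j + \<alpha> k" "j < 4" "k < 4" "j \<noteq> k"
    for i j k
  proof -
    have "upt_pt \<alpha> (subl n (unitv i)) = upt_pt \<alpha> n + (\<alpha> j + \<alpha> k)"
      using upt_pt_neighbours_even(2)[OF True i, where \<alpha> = \<alpha>] jk(1) by simp
    from even_site_quotient[OF True _ jk(2-4) this assms(1) assms(3,5)[OF i]] i show ?thesis
      by (auto simp: S_def parity_even_subl_unitv True)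
  qed
  \<comment> \<open>One_nat_def would turn the index 1 into Suc 0 and block the instances of minus.\<close>
  show thesis
    by (rule that[of S]) (simp add: plus minus[OF _ two_delta_diff_evec(1)]
        minus[OF _ two_delta_diff_evec(2)] minus[OF _ two_delta_diff_evec(3)] del: One_nat_def)
next
  case False
  define S where "S = (\<lambda>k. \<rho> (upt_pt \<alpha> n - \<alpha> k) / \<tau> (upt_pt \<alpha> n - \<alpha> k))"
  have plus: "u (addl n (unitv i)) / (1 + u n * u (addl n (unitv i))) = divdiff S lam j k"
    if i: "i \<in> {1,2,3}" and jk: "2 *\<^sub>R delta \<alpha> - evec \<alpha> i = \<alpha> j + \<alpha> k" "j < 4" "k < 4" "j \<noteq> k"
    for i j k
  proof -
    have "upt_pt \<alpha> (addl n (unitv i)) + (\<alpha> j + \<alpha> k) = upt_pt \<alpha> n"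
      using upt_pt_neighbours_odd(1)[OF False i, where \<alpha> = \<alpha>] jk(1) by simp
    from odd_site_quotient[OF False _ jk(2-4) this assms(1) assms(2,4)[OF i]] i show ?thesis
      by (auto simp: S_def parity_even_addl_unitv False)
  qed
  have minus: "u (subl n (unitv i)) / (1 + u n * u (subl n (unitv i))) = divdiff S lam 0 i"
    if i: "i \<in> {1,2,3}" for i
  proof -
    have "upt_pt \<alpha> (subl n (unitv i)) + (\<alpha> 0 + \<alpha> i) = upt_pt \<alpha> n"
      using upt_pt_neighbours_odd(2)[OF False i, where \<alpha> = \<alpha>] evec_add_two_delta[OF i] by simp
    from odd_site_quotient[OF False _ _ _ _ this assms(1) assms(3,5)[OF i]] i show ?thesis
      by (auto simp: S_def parity_even_subl_unitv False)
  qed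
  show thesis
    by (rule that[of S]) (simp add: minus plus[OF _ two_delta_diff_evec(1)]
        plus[OF _ two_delta_diff_evec(2)] plus[OF _ two_delta_diff_evec(3)] ac_simps del: One_nat_def)
qed

end

theorem proposition3p1:
  fixes \<Gamma> :: "nat \<Rightarrow> complex" and \<alpha> :: "nat \<Rightarrow> real^3"
    and lam :: "nat \<Rightarrow> complex" and a b :: "nat \<Rightarrow> nat \<Rightarrow> complex"
    and \<sigma> \<rho> \<tau> :: "real^3 \<Rightarrow> complex" and n :: lat
  assumes hG: "\<Gamma> 1 + \<Gamma> 2 + \<Gamma> 3 = 0"
    and hdist: "\<And>l m. l < 4 \<Longrightarrow> m < 4 \<Longrightarrow> l \<noteq> m \<Longrightarrow> lam l \<noteq> lam m"
    and hGl: "(\<Sum>i\<in>{1,2,3}. \<Gamma> i * lam i) \<noteq> 0"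
    and hl0: "lam 0 = (\<Sum>i\<in>{1,2,3}. lam i)
                - (\<Sum>i\<in>{1,2,3}. \<Gamma> i * (lam i)\<^sup>2) / (\<Sum>i\<in>{1,2,3}. \<Gamma> i * lam i)"
    and hskew: "\<And>l m. l < 4 \<Longrightarrow> m < 4 \<Longrightarrow> l \<noteq> m \<Longrightarrow> a m l = - a l m"
    and hsym: "\<And>l m. l < 4 \<Longrightarrow> m < 4 \<Longrightarrow> l \<noteq> m \<Longrightarrow> b m l = b l m"
    and hab: "\<And>l m. l < 4 \<Longrightarrow> m < 4 \<Longrightarrow> l \<noteq> m \<Longrightarrow> a l m * b l m = lam l - lam m"
    and h1: "\<And>x l m. l < 4 \<Longrightarrow> m < 4 \<Longrightarrow> l \<noteq> m \<Longrightarrow>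
        a l m * \<tau> x * \<sigma> (x + \<alpha> l + \<alpha> m)
          = \<sigma> (x + \<alpha> l) * \<tau> (x + \<alpha> m) - \<tau> (x + \<alpha> l) * \<sigma> (x + \<alpha> m)"
    and h2: "\<And>x l m. l < 4 \<Longrightarrow> m < 4 \<Longrightarrow> l \<noteq> m \<Longrightarrow>
        a l m * \<rho> x * \<tau> (x + \<alpha> l + \<alpha> m)
          = \<tau> (x + \<alpha> l) * \<rho> (x + \<alpha> m) - \<rho> (x + \<alpha> l) * \<tau> (x + \<alpha> m)"
    and h3: "\<And>x l m. l < 4 \<Longrightarrow> m < 4 \<Longrightarrow> l \<noteq> m \<Longrightarrow>
        b l m * \<tau> (x + \<alpha> l) * \<tau> (x + \<alpha> m)
          = \<tau> x * \<tau> (x + \<alpha> l + \<alpha> m) + \<rho> x * \<sigma> (x + \<alpha> l + \<alpha> m)"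
    and hden0: "\<tau> (upt_pt \<alpha> n) \<noteq> 0"
    and hdenp: "\<And>i. i \<in> {1,2,3} \<Longrightarrow> \<tau> (upt_pt \<alpha> (addl n (unitv i))) \<noteq> 0"
    and hdenm: "\<And>i. i \<in> {1,2,3} \<Longrightarrow> \<tau> (upt_pt \<alpha> (subl n (unitv i))) \<noteq> 0"
    and hdenp': "\<And>i. i \<in> {1,2,3} \<Longrightarrow>
        1 + ufun \<sigma> \<rho> \<tau> \<alpha> n * ufun \<sigma> \<rho> \<tau> \<alpha> (addl n (unitv i)) \<noteq> 0"
    and hdenm': "\<And>i. i \<in> {1,2,3} \<Longrightarrow>
        1 + ufun \<sigma> \<rho> \<tau> \<alpha> n * ufun \<sigma> \<rho> \<tau> \<alpha> (subl n (unitv i)) \<noteq> 0"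
  shows "(\<Sum>i\<in>{1,2,3}. \<Gamma> i *
            (ufun \<sigma> \<rho> \<tau> \<alpha> (addl n (unitv i))
               / (1 + ufun \<sigma> \<rho> \<tau> \<alpha> n * ufun \<sigma> \<rho> \<tau> \<alpha> (addl n (unitv i)))
           + ufun \<sigma> \<rho> \<tau> \<alpha> (subl n (unitv i))
               / (1 + ufun \<sigma> \<rho> \<tau> \<alpha> n * ufun \<sigma> \<rho> \<tau> \<alpha> (subl n (unitv i))))) = 0"
proof -
  interpret bilinear_tau_system \<alpha> lam a b \<sigma> \<rho> \<tau>
    using hdist hab h1 h2 h3 by unfold_locales
  obtain S where "(\<Sum>i\<in>{1,2,3}. \<Gamma> i *
            (u (addl n (unitv i)) / (1 + u n * u (addl n (unitv i)))
           + u (subl n (unitv i)) / (1 + u n * u (subl n (unitv i)))))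
     = \<Gamma> 1 * (divdiff S lam 0 1 + divdiff S lam 2 3) + \<Gamma> 2 * (divdiff S lam 0 2 + divdiff S lam 1 3)
       + \<Gamma> 3 * (divdiff S lam 0 3 + divdiff S lam 1 2)"
    using neighbour_sum_eq_weighted_divdiffs[OF hden0 hdenp hdenm hdenp' hdenm'] by blast
  with weighted_divdiff_sum_eq_0[OF hG hdist hGl hl0] show ?thesis by simp
qed

end
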